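(* Let $p$ be a prime, $\beta\ge1$ and $\alpha_1,\dots,\alpha_n\ge1$, and put $\alpha_{\max}=\max_j\alpha_j$. Every polyfract $P\in\mathbb{Z}_{p^\beta}\binom{X_1,\dots,X_n}{\mathbb{Z}_{p^{\alpha_1}}\times\cdots\times\mathbb{Z}_{p^{\alpha_n}}}$ satisfies $$\deg(P)\le\deg\Big(\binom{0}{X_1}_{p^{\alpha_1},p^\beta}\cdots\binom{0}{X_n}_{p^{\alpha_n},p^\beta}\Big)=\sum_{j=1}^n p^{\alpha_j}-n+(\beta-1)(p-1)p^{\alpha_{\max}-1},$$ and this bound is attained (by the product of Lagrange functions shown).
   Context: $\mathbb{Z}_r=\mathbb{Z}/r\mathbb{Z}$; $\binom{X}{\delta}=X(X-1)\cdots(X-\delta+1)/\delta!$, $\binom{X}{0}=1$. A $\mathbb{Z}_{r}$-polyfract in $X_1,\dots,X_n$ is a formal finite sum $P=\sum_{\delta\in\mathbb{N}^n}P_\delta\prod_j\binom{X_j}{\delta_j}$, $P_\delta\in\mathbb{Z}_r$, evaluated at $x\in\mathbb{Z}^n$ in $\mathbb{Z}_r$ in the obvious way; its (total) degree is $\max\{\delta_1+\cdots+\delta_n:P_\delta\ne0\}$. Distinct polyfracts give distinct maps $\mathbb{Z}^n\to\mathbb{Z}_r$, so a map is identified with the polyfract representing it. $\mathbb{Z}_r\binom{X_1,\dots,X_n}{\mathbb{Z}_{q_1}\times\cdots\times\mathbb{Z}_{q_n}}$ is the set of polyfracts whose map is $q_j$-periodic in the $j$-th variable. For $q,r\ge1$,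 $\binom{0}{X}_{q,r}$ denotes the Lagrange function $\mathbb{Z}\to\mathbb{Z}_r$ taking value $1$ at $x\equiv0\pmod q$ and $0$ otherwise (it is represented by a polyfract when $q,r$ are powers of the same prime), and the product above is the function $x\mapsto\prod_j\binom{0}{x_j}_{p^{\alpha_j},p^\beta}$. *)

theory Defs
  imports Complex_Main "HOL-Computational_Algebra.Primes"
begin

text \<open>A Z_r-polyfract in the variables X_0,...,X_(n-1) is represented by its
coefficient function c, mapping a multi-index delta (a function nat => nat
vanishing outside {0..<n}) to a coefficient in Z_r, represented canonically
as an integer in {0..<r}; only finitely many coefficients are nonzero.\<close>

definition is_polyfract :: "nat \<Rightarrow> int \<Rightarrow> ((nat \<Rightarrow> nat) \<Rightarrow> int) \<Rightarrow> bool" where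
  "is_polyfract n r c \<longleftrightarrow>
     (\<forall>\<delta>. 0 \<le> c \<delta> \<and> c \<delta> < r) \<and>
     finite {\<delta>. c \<delta> \<noteq> 0} \<and>
     (\<forall>\<delta>. c \<delta> \<noteq> 0 \<longrightarrow> (\<forall>j\<ge>n. \<delta> j = 0))"

text \<open>Binomial coefficient X(X-1)...(X-k+1)/k! at an integer X; computed in the
rationals, the value is an integer, which we extract with floor.\<close>

definition int_binom :: "int \<Rightarrow> nat \<Rightarrow> int" where
  "int_binom x k = \<lfloor>(of_int x :: rat) gchoose k\<rfloor>"

definition pf_eval :: "nat \<Rightarrow> int \<Rightarrow> ((nat \<Rightarrow> nat) \<Rightarrow> int) \<Rightarrow> (nat \<Rightarrow> int) \<Rightarrow> int" where
  "pf_eval n r c x =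
     (\<Sum>\<delta>\<in>{\<delta>. c \<delta> \<noteq> 0}. c \<delta> * (\<Prod>j<n. int_binom (x j) (\<delta> j))) mod r"

definition pf_periodic ::
  "nat \<Rightarrow> int \<Rightarrow> (nat \<Rightarrow> int) \<Rightarrow> ((nat \<Rightarrow> nat) \<Rightarrow> int) \<Rightarrow> bool" where
  "pf_periodic n r q c \<longleftrightarrow>
     (\<forall>x j. j < n \<longrightarrow> pf_eval n r c (x(j := x j + q j)) = pf_eval n r c x)"

text \<open>Total degree (the zero polyfract gets degree 0 by convention).\<close>

definition pf_degree :: "nat \<Rightarrow> ((nat \<Rightarrow> nat) \<Rightarrow> int) \<Rightarrow> nat" where
  "pf_degree n c = Max (insert 0 ((\<lambda>\<delta>. \<Sum>j<n. \<delta> j) ` {\<delta>. c \<delta> \<noteq> 0}))"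

text \<open>Product of the Lagrange functions binom(0, x_j)_{q_j, r}, with values in {0,1}.\<close>

definition lagrange_prod :: "nat \<Rightarrow> (nat \<Rightarrow> int) \<Rightarrow> (nat \<Rightarrow> int) \<Rightarrow> int" where
  "lagrange_prod n q x = (\<Prod>j<n. if q j dvd x j then 1 else 0)"

end

theory Submission
  imports Defs "HOL-Number_Theory.Cong"
begin

text \<open>
  In the binomial basis the coefficients of a function on the integers are its iterated
  forward differences at 0 (Newton's formula). If h is q-periodic, Newton's formula over one
  period makes s k = (\<Delta>^k h)(0) a solution of s K = - (\<Sum>0<j<q. (q choose j) s (K - j)).
  For q = p^\<alpha> every coefficient of this recurrence is divisible by p, and by p^2 once j
  exceeds \<phi> = (p - 1) p^(\<alpha> - 1), so the p-adic valuation of s k gains at least one every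
  \<phi> steps beyond p^\<alpha>; modulo p^\<beta> the Newton series of h therefore has no terms of
  degree beyond p^\<alpha> - 1 + (\<beta> - 1) \<phi>.

  A periodic function of several variables is a combination of products of indicator
  functions of residue classes, so its Newton coefficients are combinations of products of
  such sequences s, and these vanish modulo p^\<beta> once the total degree exceeds the bound.
  As a polyfract is determined by its values, this bounds the degree of every periodic
  polyfract. For the Lagrange function the coefficient at the extremal multi-index is
  p^(\<beta> - 1) times a unit modulo p, because p^\<alpha> choose \<phi> contains p exactly once;
  hence the bound is attained.
\<close>

section \<open>Binomial coefficients at integers and forward differences\<close>

lemma of_int_int_binom: "(of_int (int_binom x k) :: rat) = of_int x gchoose k"
proof (cases "x \<ge> 0")
  case True
  then obtain m where "x = int m" by (metis nonneg_eq_int)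
  then show ?thesis
    unfolding int_binom_def by (simp add: binomial_gbinomial[symmetric])
next
  case False
  define m where "m = nat (int k - x - 1)"
  have m: "int m = int k - x - 1" using False unfolding m_def by simp
  have "(of_int x :: rat) gchoose k = (-1)^k * (of_nat k - of_int x - 1 gchoose k)"
    by (rule gbinomial_negated_upper)
  also have "of_nat k - of_int x - 1 = (of_nat m :: rat)"
    using arg_cong[OF m, of "of_int :: int \<Rightarrow> rat"] by simp
  also have "(-1)^k * (of_nat m gchoose k) = (of_int ((-1)^k * int (m choose k)) :: rat)"
    by (simp add: binomial_gbinomial)
  finally show ?thesis unfolding int_binom_def by simp
qed

lemma int_binom_of_nat [simp]: "int_binom (int m) k = int (m choose k)"
  unfolding int_binom_def by (simp add: binomial_gbinomial[symmetric])

lemma int_binom_0 [simp]: "int_binom x 0 = 1"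
  unfolding int_binom_def by simp

lemma int_binom_Suc_Suc: "int_binom (x + 1) (Suc k) = int_binom x k + int_binom x (Suc k)"
proof -
  have "(of_int (int_binom (x + 1) (Suc k)) :: rat) = of_int (int_binom x k + int_binom x (Suc k))"
    using gbinomial_Suc_Suc[of "of_int x :: rat" k] by (simp add: of_int_int_binom)
  then show ?thesis by (simp only: of_int_eq_iff)
qed

primrec fwd_diff :: "(int \<Rightarrow> int) \<Rightarrow> nat \<Rightarrow> int \<Rightarrow> int" where
  "fwd_diff u 0 x = u x"
| "fwd_diff u (Suc k) x = fwd_diff u k (x + 1) - fwd_diff u k x"

lemma fwd_diff_fwd_diff: "fwd_diff (fwd_diff u k) i x = fwd_diff u (i + k) x"
  by (induction i arbitrary: x) simp_all

lemma fwd_diff_periodic: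
  assumes "\<And>y. u (y + q) = u y"
  shows "fwd_diff u k (x + q) = fwd_diff u k x"
proof (induction k arbitrary: x)
  case (Suc k)
  have "x + q + 1 = (x + 1) + q" by simp
  then show ?case using Suc by (simp only: fwd_diff.simps)
qed (simp add: assms)

lemma sum_choose_Suc:
  fixes a :: "nat \<Rightarrow> 'a :: comm_semiring_1"
  shows "(\<Sum>i\<le>m. of_nat (m choose i) * (a i + a (Suc i))) = (\<Sum>i\<le>Suc m. of_nat (Suc m choose i) * a i)"
proof -
  have "(\<Sum>i\<le>Suc m. of_nat (Suc m choose i) * a i)
      = a 0 + (\<Sum>i\<le>m. of_nat (m choose Suc i) * a (Suc i)) + (\<Sum>i\<le>m. of_nat (m choose i) * a (Suc i))"
    by (subst sum.atMost_Suc_shift) (simp add: distrib_left distrib_right sum.distrib ac_simps)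
  also have "a 0 + (\<Sum>i\<le>m. of_nat (m choose Suc i) * a (Suc i)) = (\<Sum>i\<le>Suc m. of_nat (m choose i) * a i)"
    by (simp only: sum.atMost_Suc_shift) simp
  also have "\<dots> = (\<Sum>i\<le>m. of_nat (m choose i) * a i)"
    by (simp add: binomial_eq_0)
  finally show ?thesis by (simp add: distrib_left sum.distrib)
qed

lemma newton_forward: "u (x + int m) = (\<Sum>i\<le>m. int (m choose i) * fwd_diff u i x)"
proof (induction m arbitrary: x)
  case (Suc m)
  have "u (x + int (Suc m)) = u ((x + 1) + int m)" by (simp add: algebra_simps)
  also have "\<dots> = (\<Sum>i\<le>m. int (m choose i) * (fwd_diff u i x + fwd_diff u (Suc i) x))"
    by (simp add: Suc)
  finally show ?case using sum_choose_Suc[of m "\<lambda>i. fwd_diff u i x"] by simp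
qed simp

lemma fwd_diff_periodic_recurrence:
  assumes per: "\<And>y. h (y + int q) = h y"
  shows "fwd_diff h k 0 = (\<Sum>i\<le>q. int (q choose i) * fwd_diff h (i + k) 0)"
  using newton_forward[of "fwd_diff h k" 0 q] fwd_diff_periodic[of h "int q" k 0, OF per]
  by (simp add: fwd_diff_fwd_diff)

section \<open>Binomial coefficients of prime powers\<close>

lemma prime_dvd_choose_prime_power:
  fixes p :: nat
  assumes p: "prime p" and i: "0 < i" "i < p ^ a"
  shows "p dvd (p ^ a choose i)"
proof (rule ccontr)
  assume "\<not> p dvd (p ^ a choose i)"
  then have "coprime (p ^ a) (p ^ a choose i)"
    using prime_imp_coprime[OF p] by simp
  moreover have "p ^ a dvd i * (p ^ a choose i)"
    by (metis times_binomial_minus1_eq[OF i(1)] dvd_triv_left)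
  ultimately have "p ^ a dvd i"
    by (simp add: coprime_dvd_mult_left_iff)
  then show False using i by (simp add: nat_dvd_not_less)
qed

lemma prime_square_dvd_choose_prime_power:
  fixes p :: nat
  assumes p: "prime p" and a: "a \<ge> 1" and i: "(p - 1) * p ^ (a - 1) < i" "i < p ^ a"
  shows "p\<^sup>2 dvd (p ^ a choose i)"
proof (rule ccontr)
  assume not_dvd: "\<not> p\<^sup>2 dvd (p ^ a choose i)"
  have pa: "p ^ a = p * p ^ (a - 1)"
    using a by (simp add: power_eq_if)
  obtain w where w: "(p ^ a choose i) = p * w"
    using prime_dvd_choose_prime_power[OF p _ i(2)] i by fastforce
  with not_dvd have "\<not> p dvd w"
    by (auto simp: power2_eq_square)
  then have "coprime (p ^ (a - 1)) w"
    using prime_imp_coprime[OF p] by simp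
  moreover have "p * (i * w) = p * (p ^ (a - 1) * ((p ^ a - 1) choose (i - 1)))"
    using times_binomial_minus1_eq[of i "p ^ a"] i pa w by (simp add: ac_simps)
  then have "p ^ (a - 1) dvd i * w"
    using prime_gt_0_nat[OF p] by (metis dvd_triv_left mult_left_cancel not_gr0)
  ultimately have "p ^ (a - 1) dvd i"
    by (simp add: coprime_dvd_mult_left_iff)
  then obtain t where t: "i = p ^ (a - 1) * t" ..
  with i(2) pa have "t < p" by simp
  with t have "i \<le> (p - 1) * p ^ (a - 1)" by simp
  with i(1) show False by simp
qed

lemma choose_pred_prime_power_cong:
  fixes p :: nat
  assumes p: "prime p" and j: "j < p ^ a"
  shows "[int ((p ^ a - 1) choose j) = (-1) ^ j] (mod int p)"
  using j
proof (induction j)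
  case (Suc j)
  have "p ^ a = Suc (p ^ a - 1)"
    using prime_gt_0_nat[OF p] by simp
  then have "int (p ^ a choose Suc j) = int ((p ^ a - 1) choose j) + int ((p ^ a - 1) choose Suc j)"
    by (metis binomial_Suc_Suc of_nat_add)
  moreover have "[int (p ^ a choose Suc j) = 0] (mod int p)"
    using prime_dvd_choose_prime_power[OF p _ Suc.prems] by (simp add: cong_0_iff)
  ultimately have "[int ((p ^ a - 1) choose Suc j) = - int ((p ^ a - 1) choose j)] (mod int p)"
    by (simp add: cong_iff_dvd_diff add.commute)
  also have "[- int ((p ^ a - 1) choose j) = - ((-1) ^ j)] (mod int p)"
    using Suc by (simp add: cong_minus_minus_iff)
  finally show ?case by simp
qed simp

lemma choose_prime_power_totient:
  fixes p :: nat
  assumes p: "prime p" and a: "a \<ge> 1"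
  shows "\<exists>w. (p ^ a choose ((p - 1) * p ^ (a - 1))) = p * w \<and> \<not> p dvd w"
proof -
  define \<phi> where "\<phi> = (p - 1) * p ^ (a - 1)"
  have p1: "p > 1" using prime_gt_1_nat[OF p] .
  have pa: "p ^ a = p * p ^ (a - 1)" using a by (simp add: power_eq_if)
  have \<phi>: "0 < \<phi>" "\<phi> < p ^ a" unfolding \<phi>_def pa using p1 by simp_all
  obtain w where w: "(p ^ a choose \<phi>) = p * w"
    using prime_dvd_choose_prime_power[OF p \<phi>] by blast
  have "p * p ^ (a - 1) * (w * (p - 1)) = p * p ^ (a - 1) * ((p ^ a - 1) choose (\<phi> - 1))"
    using times_binomial_minus1_eq[OF \<phi>(1), of "p ^ a"] pa w unfolding \<phi>_def by (simp add: ac_simps)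
  then have pred: "w * (p - 1) = (p ^ a - 1) choose (\<phi> - 1)"
    using p1 by simp
  have "\<not> int p dvd (-1) ^ (\<phi> - 1)"
    using p1 by (cases "even (\<phi> - 1)") auto
  moreover have "[int ((p ^ a - 1) choose (\<phi> - 1)) = (-1) ^ (\<phi> - 1)] (mod int p)"
    using choose_pred_prime_power_cong[OF p] \<phi> by simp
  ultimately have "\<not> p dvd w * (p - 1)"
    using pred cong_dvd_iff by (metis int_dvd_int_iff)
  then have "\<not> p dvd w"
    by auto
  then show ?thesis
    using w unfolding \<phi>_def by blast
qed

lemma prime_power_totient_bounds:
  fixes p :: nat
  assumes p: "prime p" and a: "a \<ge> 1"
  shows "0 < (p - 1) * p ^ (a - 1)" "(p - 1) * p ^ (a - 1) < p ^ a" "p ^ a \<le> 2 * ((p - 1) * p ^ (a - 1))"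
proof -
  have p1: "p > 1" using prime_gt_1_nat[OF p] .
  have pa: "p ^ a = p * p ^ (a - 1)" using a by (simp add: power_eq_if)
  show "0 < (p - 1) * p ^ (a - 1)" "(p - 1) * p ^ (a - 1) < p ^ a"
    using p1 pa by simp_all
  have "p * p ^ (a - 1) \<le> (2 * (p - 1)) * p ^ (a - 1)"
    using p1 by (intro mult_right_mono) simp_all
  then show "p ^ a \<le> 2 * ((p - 1) * p ^ (a - 1))"
    using pa by (simp add: mult.assoc)
qed

lemma prime_power_dvd_choose_prime_power:
  fixes p :: nat
  assumes p: "prime p" and a: "a \<ge> 1" and j: "0 < j" "j < p ^ a"
  defines "c \<equiv> if j \<le> (p - 1) * p ^ (a - 1) then 1 else 2"
  shows "int p ^ c dvd int (p ^ a choose j)" and "j \<le> c * ((p - 1) * p ^ (a - 1))"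
proof -
  show "int p ^ c dvd int (p ^ a choose j)"
    using prime_dvd_choose_prime_power[OF p j] prime_square_dvd_choose_prime_power[OF p a _ j(2)]
    unfolding c_def by (simp flip: of_nat_power)
  show "j \<le> c * ((p - 1) * p ^ (a - 1))"
    using prime_power_totient_bounds[OF p a] j unfolding c_def by auto
qed

section \<open>Valuations of solutions of the periodicity recurrence\<close>

definition binom_recurrence :: "nat \<Rightarrow> (nat \<Rightarrow> int) \<Rightarrow> bool" where
  "binom_recurrence q s \<longleftrightarrow> (\<forall>K\<ge>q. s K = - (\<Sum>j\<in>{1..<q}. int (q choose j) * s (K - j)))"

lemma fwd_diff_binom_recurrence:
  assumes per: "\<And>y. h (y + int q) = h y" and q: "q \<ge> 1"
  shows "binom_recurrence q (\<lambda>k. fwd_diff h k 0)"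
  unfolding binom_recurrence_def
proof (intro allI impI)
  fix K assume "q \<le> K"
  then obtain k where K: "K = k + q" by (metis le_add_diff_inverse2)
  have "{..q} = insert 0 (insert q {1..<q})" using q by auto
  then have "fwd_diff h k 0 = fwd_diff h k 0 + fwd_diff h K 0
      + (\<Sum>i\<in>{1..<q}. int (q choose i) * fwd_diff h (k + i) 0)"
    using q fwd_diff_periodic_recurrence[of h q k, OF per] K by (simp add: add.commute)
  moreover have "(\<Sum>i\<in>{1..<q}. int (q choose i) * fwd_diff h (k + i) 0)
      = (\<Sum>i\<in>{1..<q}. int (q choose (q - i)) * fwd_diff h (k + (q - i)) 0)"
    by (subst sum.atLeastLessThan_rev) simp
  moreover have "\<dots> = (\<Sum>j\<in>{1..<q}. int (q choose j) * fwd_diff h (K - j) 0)"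
    unfolding K by (intro sum.cong refl) (auto simp: binomial_symmetric[symmetric])
  ultimately show "fwd_diff h K 0 = - (\<Sum>j\<in>{1..<q}. int (q choose j) * fwd_diff h (K - j) 0)"
    by linarith
qed

text \<open>A lower bound for the p-adic valuation of the k-th term of a solution of
  binom_recurrence (p ^ a), where q = p ^ a and \<phi> = (p - 1) * p ^ (a - 1).\<close>

definition val_bound :: "nat \<Rightarrow> nat \<Rightarrow> nat \<Rightarrow> nat" where
  "val_bound q \<phi> k = (if k < q then 0 else (k - q) div \<phi> + 1)"

lemma val_bound_diff_le:
  assumes "0 < \<phi>" and "j \<le> c * \<phi>" "j \<le> K"
  shows "val_bound q \<phi> K \<le> val_bound q \<phi> (K - j) + c"
proof (cases "K < q \<or> K - j < q")
  case True
  then have "K < q \<or> K - q < c * \<phi>" using assms by linarith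
  then show ?thesis
    using less_mult_imp_div_less[of "K - q" c \<phi>] by (auto simp: val_bound_def)
next
  case False
  have "(K - q) div \<phi> \<le> ((K - j - q) + c * \<phi>) div \<phi>"
    using assms False by (intro div_le_mono) linarith
  also have "\<dots> = c + (K - j - q) div \<phi>" using assms by simp
  finally show ?thesis using False by (simp add: val_bound_def)
qed

lemma val_bound_ge:
  assumes "0 < \<phi>" and "q + m * \<phi> \<le> K"
  shows "m + 1 \<le> val_bound q \<phi> K"
proof -
  have "m = (m * \<phi>) div \<phi>" using assms by simp
  also have "\<dots> \<le> (K - q) div \<phi>" using assms by (intro div_le_mono) linarith
  finally show ?thesis using assms by (simp add: val_bound_def)
qed

lemma le_val_bound:
  assumes "0 < \<phi>"
  shows "k + 1 \<le> q + \<phi> * val_bound q \<phi> k"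
proof (cases "k < q")
  case False
  have "k - q < (k - q) div \<phi> * \<phi> + \<phi>"
    using assms mod_less_divisor[OF assms, of "k - q"] div_mult_mod_eq[of "k - q" \<phi>] by linarith
  then show ?thesis using False by (simp add: val_bound_def algebra_simps)
qed (simp add: val_bound_def)

lemma binom_recurrence_val_bound:
  fixes p a :: nat
  assumes p: "prime p" and a: "a \<ge> 1" and rec: "binom_recurrence (p ^ a) s"
  shows "int p ^ val_bound (p ^ a) ((p - 1) * p ^ (a - 1)) K dvd s K"
proof (induction K rule: less_induct)
  case (less K)
  define q where "q = p ^ a"
  define \<phi> where "\<phi> = (p - 1) * p ^ (a - 1)"
  have \<phi>: "0 < \<phi>" using prime_power_totient_bounds[OF p a] unfolding \<phi>_def by simp
  show ?case
  proof (cases "K < q")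
    case False
    have "int p ^ val_bound q \<phi> K dvd int (q choose j) * s (K - j)" if j: "j \<in> {1..<q}" for j
    proof -
      define c where "c = (if j \<le> \<phi> then 1 else 2 :: nat)"
      have c: "int p ^ c dvd int (q choose j)" "j \<le> c * \<phi>"
        using prime_power_dvd_choose_prime_power[OF p a, of j] j unfolding c_def q_def \<phi>_def by auto
      have "int p ^ val_bound q \<phi> (K - j) dvd s (K - j)"
        using less[of "K - j"] j False unfolding q_def \<phi>_def by simp
      then have "int p ^ (c + val_bound q \<phi> (K - j)) dvd int (q choose j) * s (K - j)"
        using c(1) by (simp add: power_add mult_dvd_mono)
      moreover have "val_bound q \<phi> K \<le> c + val_bound q \<phi> (K - j)"
        using val_bound_diff_le[OF \<phi> c(2), where K=K and q=q] j False by simp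
      ultimately show ?thesis
        using le_imp_power_dvd dvd_trans by blast
    qed
    then have "int p ^ val_bound q \<phi> K dvd (\<Sum>j\<in>{1..<q}. int (q choose j) * s (K - j))"
      by (rule dvd_sum)
    then show ?thesis
      using rec False unfolding binom_recurrence_def q_def \<phi>_def by simp
  qed (simp add: val_bound_def q_def)
qed

lemma val_bound_off_centre_ge:
  assumes \<phi>: "0 < \<phi>" "\<phi> < q" "q \<le> 2 * \<phi>" and j: "j \<in> {1..<q}" "j \<noteq> \<phi>"
  shows "Suc (Suc m) \<le> (if j \<le> \<phi> then 1 else 2) + val_bound q \<phi> (q - 1 + Suc m * \<phi> - j)"
proof (cases "j < \<phi>")
  case True
  then have "q + m * \<phi> \<le> q - 1 + Suc m * \<phi> - j" by simp
  then have "m + 1 \<le> val_bound q \<phi> (q - 1 + Suc m * \<phi> - j)" by (rule val_bound_ge[OF \<phi>(1)])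
  then show ?thesis using True by simp
next
  case False
  show ?thesis
  proof (cases m)
    case (Suc m')
    have "j \<le> q - 1" "Suc m * \<phi> = 2 * \<phi> + m' * \<phi>" using j Suc by auto
    then have "q + m' * \<phi> \<le> q - 1 + Suc m * \<phi> - j" using \<phi> by linarith
    then have "m' + 1 \<le> val_bound q \<phi> (q - 1 + Suc m * \<phi> - j)" by (rule val_bound_ge[OF \<phi>(1)])
    then show ?thesis using False j Suc by simp
  qed (use False j in simp)
qed

lemma binom_recurrence_off_centre_dvd:
  fixes p a :: nat
  assumes p: "prime p" and a: "a \<ge> 1" and rec: "binom_recurrence (p ^ a) s"
    and j: "j \<in> {1..<p ^ a} - {(p - 1) * p ^ (a - 1)}"
  shows "int p ^ Suc (Suc m) dvd
           int (p ^ a choose j) * s (p ^ a - 1 + Suc m * ((p - 1) * p ^ (a - 1)) - j)"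
proof -
  define q where "q = p ^ a"
  define \<phi> where "\<phi> = (p - 1) * p ^ (a - 1)"
  define c where "c = (if j \<le> \<phi> then 1 else 2 :: nat)"
  define K where "K = q - 1 + Suc m * \<phi>"
  have \<phi>: "0 < \<phi>" "\<phi> < q" "q \<le> 2 * \<phi>"
    using prime_power_totient_bounds[OF p a] unfolding q_def \<phi>_def by auto
  have "int p ^ c dvd int (q choose j)"
    using prime_power_dvd_choose_prime_power[OF p a, of j] j unfolding c_def q_def \<phi>_def by auto
  moreover have "int p ^ val_bound q \<phi> (K - j) dvd s (K - j)"
    using binom_recurrence_val_bound[OF p a rec] unfolding q_def \<phi>_def by simp
  ultimately have "int p ^ (c + val_bound q \<phi> (K - j)) dvd int (q choose j) * s (K - j)"
    by (simp add: power_add mult_dvd_mono)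
  moreover have "Suc (Suc m) \<le> c + val_bound q \<phi> (K - j)"
    using val_bound_off_centre_ge[OF \<phi>, of j m] j unfolding c_def K_def q_def \<phi>_def by simp
  ultimately show ?thesis
    unfolding K_def q_def \<phi>_def using le_imp_power_dvd dvd_trans by blast
qed

lemma binom_recurrence_exact_val:
  fixes p a :: nat
  assumes p: "prime p" and a: "a \<ge> 1" and rec: "binom_recurrence (p ^ a) s"
    and base: "\<not> int p dvd s (p ^ a - 1)"
  shows "\<exists>u. s (p ^ a - 1 + m * ((p - 1) * p ^ (a - 1))) = int p ^ m * u \<and> \<not> int p dvd u"
proof (induction m)
  case (Suc m)
  define q where "q = p ^ a"
  define \<phi> where "\<phi> = (p - 1) * p ^ (a - 1)"
  define K where "K = q - 1 + Suc m * \<phi>"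
  define T where "T j = int (q choose j) * s (K - j)" for j
  have \<phi>: "0 < \<phi>" "\<phi> < q" "q \<le> 2 * \<phi>"
    using prime_power_totient_bounds[OF p a] unfolding q_def \<phi>_def by auto
  have "K - \<phi> = q - 1 + m * \<phi>"
    unfolding K_def by simp
  then obtain u where u: "s (K - \<phi>) = int p ^ m * u" "\<not> int p dvd u"
    using Suc unfolding q_def \<phi>_def by auto
  obtain w where w: "(q choose \<phi>) = p * w" "\<not> p dvd w"
    using choose_prime_power_totient[OF p a] unfolding q_def \<phi>_def by blast
  have "int p ^ Suc (Suc m) dvd T j" if "j \<in> {1..<q} - {\<phi>}" for j
    using binom_recurrence_off_centre_dvd[OF p a rec that[unfolded q_def \<phi>_def], of m]
    unfolding T_def K_def q_def \<phi>_def .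
  then have "int p ^ Suc (Suc m) dvd (\<Sum>j\<in>{1..<q} - {\<phi>}. T j)"
    by (rule dvd_sum)
  then obtain Y where Y: "(\<Sum>j\<in>{1..<q} - {\<phi>}. T j) = int p ^ Suc (Suc m) * Y" ..
  have "s K = - (\<Sum>j\<in>{1..<q}. T j)"
    using rec \<phi> unfolding binom_recurrence_def T_def K_def q_def by simp
  also have "\<dots> = - (T \<phi> + (\<Sum>j\<in>{1..<q} - {\<phi>}. T j))"
    using \<phi> by (subst sum.remove[of _ \<phi>]) auto
  also have "\<dots> = int p ^ Suc m * - (int w * u + int p * Y)"
    unfolding Y by (simp add: T_def u w algebra_simps)
  finally have "s K = int p ^ Suc m * - (int w * u + int p * Y)" .
  moreover have "\<not> int p dvd int w * u"
    using w(2) u(2) p by (simp add: prime_dvd_mult_iff)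
  then have "\<not> int p dvd - (int w * u + int p * Y)"
    by (metis dvd_add_left_iff dvd_minus_iff dvd_triv_left)
  ultimately show ?case unfolding K_def q_def \<phi>_def by blast
qed (use base in auto)

section \<open>Truncated Newton expansion of a periodic function\<close>

lemma binom_series_diff:
  "(\<Sum>l\<le>N. c l * int_binom (x + 1) l) - (\<Sum>l\<le>N. c l * int_binom x l)
     = (\<Sum>l<N. c (Suc l) * int_binom x l)"
proof (induction N)
  case (Suc N)
  have "c (Suc N) * int_binom (x + 1) (Suc N) = c (Suc N) * int_binom x N + c (Suc N) * int_binom x (Suc N)"
    by (simp add: int_binom_Suc_Suc distrib_left)
  with Suc show ?case by (simp add: algebra_simps)
qed simp

lemma fwd_diff_binom_series:
  assumes "\<And>l. N < l \<Longrightarrow> c l = 0"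
  shows "fwd_diff (\<lambda>x. \<Sum>l\<le>N. c l * int_binom x l) i x = (\<Sum>l\<le>N. c (l + i) * int_binom x l)"
proof (induction i arbitrary: x)
  case (Suc i)
  have "fwd_diff (\<lambda>x. \<Sum>l\<le>N. c l * int_binom x l) (Suc i) x
      = (\<Sum>l<N. c (Suc l + i) * int_binom x l)"
    using binom_series_diff[where N=N and c="\<lambda>l. c (l + i)" and x=x] by (simp add: Suc)
  also have "\<dots> = (\<Sum>l\<le>N. c (l + Suc i) * int_binom x l)"
    using assms[of "N + Suc i"] by (simp add: lessThan_Suc_atMost[symmetric])
  finally show ?case .
qed simp

lemma cong_periodic_shift:
  assumes per: "\<And>y. [u (y + int q) = u y] (mod r)"
  shows "[u (y + z * int q) = u y] (mod r)"
proof -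
  have nat: "[u (y + int t * int q) = u y] (mod r)" for y t
  proof (induction t)
    case (Suc t)
    have "[u ((y + int t * int q) + int q) = u (y + int t * int q)] (mod r)"
      by (rule per)
    then show ?case
      using Suc by (simp add: algebra_simps cong_trans)
  qed simp
  show ?thesis
  proof (cases "z \<ge> 0")
    case True
    then show ?thesis using nat[of y "nat z"] by simp
  next
    case False
    have "[u ((y + z * int q) + int (nat (- z)) * int q) = u (y + z * int q)] (mod r)"
      by (rule nat)
    then show ?thesis
      using False by (simp add: cong_sym_eq algebra_simps)
  qed
qed

lemma binom_series_periodic_cong:
  assumes per: "\<And>y. h (y + int q) = h y"
    and c: "\<And>l. N < l \<Longrightarrow> c l = 0" "\<And>l. [c l = fwd_diff h l 0] (mod r)"
  defines "P \<equiv> \<lambda>x. \<Sum>l\<le>N. c l * int_binom x l"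
  shows "[P (y + int q) = P y] (mod r)"
proof -
  have "P (y + int q) = (\<Sum>i\<le>q. int (q choose i) * fwd_diff P i y)"
    by (rule newton_forward)
  also have "\<dots> = (\<Sum>i\<le>q. \<Sum>l\<le>N. int (q choose i) * c (l + i) * int_binom y l)"
    unfolding P_def by (simp add: fwd_diff_binom_series c(1) sum_distrib_left mult.assoc)
  also have "\<dots> = (\<Sum>l\<le>N. (\<Sum>i\<le>q. int (q choose i) * c (l + i)) * int_binom y l)"
    by (subst sum.swap) (simp add: sum_distrib_right)
  also have "[\<dots> = (\<Sum>l\<le>N. (\<Sum>i\<le>q. int (q choose i) * fwd_diff h (i + l) 0) * int_binom y l)] (mod r)"
    using c(2) by (intro cong_sum cong_mult cong_refl) (simp add: add.commute)
  also have "(\<Sum>l\<le>N. (\<Sum>i\<le>q. int (q choose i) * fwd_diff h (i + l) 0) * int_binom y l)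
      = (\<Sum>l\<le>N. fwd_diff h l 0 * int_binom y l)"
    by (simp add: fwd_diff_periodic_recurrence[of h q, OF per, symmetric])
  also have "[\<dots> = P y] (mod r)"
    unfolding P_def using c(2) by (intro cong_sum cong_mult cong_refl) (simp add: cong_sym)
  finally show ?thesis .
qed

lemma periodic_cong_newton_trunc:
  fixes h :: "int \<Rightarrow> int"
  assumes per: "\<And>y. h (y + int q) = h y" and q: "q \<ge> 1"
    and high: "\<And>k. N < k \<Longrightarrow> r dvd fwd_diff h k 0"
  shows "[h x = (\<Sum>l\<le>N. fwd_diff h l 0 * int_binom x l)] (mod r)"
proof -
  define c where "c l = (if l \<le> N then fwd_diff h l 0 else 0)" for l
  define P where "P x = (\<Sum>l\<le>N. c l * int_binom x l)" for x
  have c: "c l = 0" if "N < l" for l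
    using that by (simp add: c_def)
  have c_cong: "[c l = fwd_diff h l 0] (mod r)" for l
    using high[of l] unfolding c_def by (simp add: cong_0_iff cong_sym)
  have "\<bar>x\<bar> \<le> \<bar>x\<bar> * int q"
    using q by (simp add: mult_le_cancel_left1)
  then have "0 \<le> x + \<bar>x\<bar> * int q"
    using abs_ge_minus_self[of x] by linarith
  then obtain m where m: "x + \<bar>x\<bar> * int q = int m"
    by (metis nonneg_eq_int)
  have "h x = h (int m)" \<comment> \<open>a congruence modulo 0 is an equation\<close>
    using cong_periodic_shift[of h q 0 x "\<bar>x\<bar>"] per m by simp
  also have "\<dots> = (\<Sum>i\<le>N + m. int (m choose i) * fwd_diff h i 0)"
    using newton_forward[of h 0 m] by (simp add: binomial_eq_0 sum.mono_neutral_left[of "{..N + m}" "{..m}"])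
  also have "[\<dots> = (\<Sum>i\<le>N + m. int (m choose i) * c i)] (mod r)"
    using c_cong by (intro cong_sum cong_mult cong_refl) (simp add: cong_sym)
  also have "(\<Sum>i\<le>N + m. int (m choose i) * c i) = P (int m)"
    unfolding P_def by (rule sum.mono_neutral_cong_right) (auto simp: c_def)
  also have "[P (int m) = P x] (mod r)"
    using cong_periodic_shift[of P q r x "\<bar>x\<bar>"] binom_series_periodic_cong[OF per c c_cong] m
    unfolding P_def by simp
  finally show ?thesis
    unfolding P_def c_def by (simp add: if_distrib cong_def cong: if_cong)
qed

definition residue_indicator :: "nat \<Rightarrow> nat \<Rightarrow> int \<Rightarrow> int" where
  "residue_indicator q a y = (if int q dvd y - int a then 1 else 0)"

definition indicator_diff :: "nat \<Rightarrow> nat \<Rightarrow> nat \<Rightarrow> int" where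
  "indicator_diff q a k = fwd_diff (residue_indicator q a) k 0"

lemma residue_indicator_periodic: "residue_indicator q a (y + int q) = residue_indicator q a y"
proof -
  have "y + int q - int a = (y - int a) + int q" by simp
  then show ?thesis by (simp only: residue_indicator_def dvd_add_triv_right_iff)
qed

lemma binom_recurrence_indicator_diff: "q \<ge> 1 \<Longrightarrow> binom_recurrence q (indicator_diff q a)"
  unfolding indicator_diff_def
  by (rule fwd_diff_binom_recurrence[of "residue_indicator q a" q, OF residue_indicator_periodic])

lemma residue_indicator_cong_newton:
  assumes "q \<ge> 1" and "\<And>k. N < k \<Longrightarrow> r dvd indicator_diff q a k"
  shows "[residue_indicator q a y = (\<Sum>k\<le>N. indicator_diff q a k * int_binom y k)] (mod r)"
  using periodic_cong_newton_trunc[of "residue_indicator q a" q, OF residue_indicator_periodic assms(1)] assms(2)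
  unfolding indicator_diff_def by blast

lemma indicator_diff_below_period:
  assumes "k < q"
  shows "indicator_diff q 0 k = (-1) ^ k"
  using assms
proof (induction k rule: less_induct)
  case (less k)
  show ?case
  proof (cases "k = 0")
    case False
    have "0 = residue_indicator q 0 (0 + int k)"
      using False less.prems by (auto simp: residue_indicator_def dest: zdvd_imp_le)
    also have "\<dots> = (\<Sum>i\<le>k. int (k choose i) * indicator_diff q 0 i)"
      unfolding indicator_diff_def by (rule newton_forward)
    also have "\<dots> = (\<Sum>i<k. int (k choose i) * (-1) ^ i) + indicator_diff q 0 k"
      using less by (simp add: lessThan_Suc_atMost[symmetric])
    finally have "indicator_diff q 0 k = - (\<Sum>i<k. (-1) ^ i * int (k choose i))"
      by (simp add: mult.commute)
    also have "\<dots> = (-1) ^ k"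
      using choose_alternating_sum[of k, where 'a=int] False
      by (simp add: lessThan_Suc_atMost[symmetric])
    finally show ?thesis .
  qed (simp add: indicator_diff_def residue_indicator_def)
qed

lemma indicator_diff_val_bound:
  fixes p :: nat
  assumes "prime p" and "\<alpha> \<ge> 1"
  shows "int p ^ val_bound (p ^ \<alpha>) ((p - 1) * p ^ (\<alpha> - 1)) k dvd indicator_diff (p ^ \<alpha>) a k"
  using binom_recurrence_val_bound[OF assms binom_recurrence_indicator_diff] prime_gt_0_nat[OF assms(1)]
  by simp

lemma indicator_diff_exact_val:
  fixes p :: nat
  assumes p: "prime p" and "\<alpha> \<ge> 1"
  shows "\<exists>u. indicator_diff (p ^ \<alpha>) 0 (p ^ \<alpha> - 1 + m * ((p - 1) * p ^ (\<alpha> - 1))) = int p ^ m * u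
             \<and> \<not> int p dvd u"
proof (rule binom_recurrence_exact_val[OF assms binom_recurrence_indicator_diff])
  have "p ^ \<alpha> \<ge> 1" "int p > 1"
    using prime_gt_1_nat[OF p] by simp_all
  then show "1 \<le> p ^ \<alpha>" and "\<not> int p dvd indicator_diff (p ^ \<alpha>) 0 (p ^ \<alpha> - 1)"
    by (simp_all add: indicator_diff_below_period, cases "even (p ^ \<alpha> - 1)") auto
qed

section \<open>Newton expansion of periodic functions of several variables\<close>

definition index_box :: "nat \<Rightarrow> (nat \<Rightarrow> nat) \<Rightarrow> (nat \<Rightarrow> nat) set" where
  "index_box n M = {\<delta>. (\<forall>j<n. \<delta> j \<le> M j) \<and> (\<forall>j\<ge>n. \<delta> j = 0)}"

lemma finite_index_box: "finite (index_box n M)"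
proof (rule finite_subset)
  show "index_box n M \<subseteq>
      {f. \<forall>j. (j \<in> {..<n} \<longrightarrow> f j \<in> {..\<Sum>i<n. M i}) \<and> (j \<notin> {..<n} \<longrightarrow> f j = 0)}"
  proof (intro subsetI CollectI allI conjI impI)
    fix \<delta> j assume \<delta>: "\<delta> \<in> index_box n M"
    show "\<delta> j = 0" if "j \<notin> {..<n}"
      using \<delta> that unfolding index_box_def by simp
    assume "j \<in> {..<n}"
    then have "\<delta> j \<le> M j" "M j \<le> (\<Sum>i<n. M i)"
      using \<delta> unfolding index_box_def by (auto intro: member_le_sum)
    then show "\<delta> j \<in> {..\<Sum>i<n. M i}" by simp
  qed
qed (rule finite_set_of_finite_funs; simp)

lemma index_box_Suc:
  "index_box (Suc n) M = (\<lambda>(\<delta>, k). \<delta>(n := k)) ` (index_box n M \<times> {..M n})"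
proof (intro equalityI subsetI)
  fix \<delta> assume "\<delta> \<in> index_box (Suc n) M"
  then have "(\<delta>(n := 0), \<delta> n) \<in> index_box n M \<times> {..M n}"
    unfolding index_box_def by auto
  then show "\<delta> \<in> (\<lambda>(\<delta>, k). \<delta>(n := k)) ` (index_box n M \<times> {..M n})"
    by (auto intro!: image_eqI[where x="(\<delta>(n := 0), \<delta> n)"])
qed (auto simp: index_box_def)

lemma inj_on_index_box_Suc: "inj_on (\<lambda>(\<delta>, k). \<delta>(n := k)) (index_box n M \<times> {..M n})"
proof (rule inj_onI, clarsimp)
  fix \<delta> k \<delta>' k'
  assume "\<delta> \<in> index_box n M" "\<delta>' \<in> index_box n M" and eq: "\<delta>(n := k) = \<delta>'(n := k')"
  then have "\<delta> n = 0" "\<delta>' n = 0" unfolding index_box_def by auto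
  with eq show "\<delta> = \<delta>' \<and> k = k'"
    by (metis fun_upd_eqD fun_upd_triv fun_upd_upd)
qed

lemma sum_index_box_prod:
  fixes F :: "nat \<Rightarrow> nat \<Rightarrow> 'a :: comm_semiring_1"
  shows "(\<Sum>\<delta>\<in>index_box n M. \<Prod>j<n. F j (\<delta> j)) = (\<Prod>j<n. \<Sum>k\<le>M j. F j k)"
proof (induction n)
  case 0
  have "index_box 0 M = {\<lambda>_. 0}" unfolding index_box_def by auto
  then show ?case by simp
next
  case (Suc n)
  have "(\<Sum>\<delta>\<in>index_box (Suc n) M. \<Prod>j<Suc n. F j (\<delta> j))
      = (\<Sum>(\<delta>, k)\<in>index_box n M \<times> {..M n}. \<Prod>j<Suc n. F j ((\<delta>(n := k)) j))"
    unfolding index_box_Suc by (subst sum.reindex[OF inj_on_index_box_Suc]) (simp add: case_prod_beta)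
  also have "\<dots> = (\<Sum>(\<delta>, k)\<in>index_box n M \<times> {..M n}. (\<Prod>j<n. F j (\<delta> j)) * F n k)"
    by (intro sum.cong refl) (auto intro!: prod.cong)
  also have "\<dots> = (\<Sum>\<delta>\<in>index_box n M. \<Prod>j<n. F j (\<delta> j)) * (\<Sum>k\<le>M n. F n k)"
    by (simp add: sum.cartesian_product[symmetric] sum_product)
  finally show ?case using Suc by simp
qed

definition binom_sum ::
  "nat \<Rightarrow> (nat \<Rightarrow> nat) set \<Rightarrow> ((nat \<Rightarrow> nat) \<Rightarrow> int) \<Rightarrow> (nat \<Rightarrow> int) \<Rightarrow> int" where
  "binom_sum n S d x = (\<Sum>\<delta>\<in>S. d \<delta> * (\<Prod>j<n. int_binom (x j) (\<delta> j)))"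

lemma pf_eval_eq_binom_sum:
  assumes "finite S" and "{\<delta>. c \<delta> \<noteq> 0} \<subseteq> S"
  shows "pf_eval n r c x = binom_sum n S c x mod r"
  unfolding pf_eval_def binom_sum_def using assms
  by (intro arg_cong[where f="\<lambda>z. z mod r"] sum.mono_neutral_left) auto

lemma binom_sum_prod_index_box:
  "binom_sum n (index_box n (\<lambda>_. N)) (\<lambda>\<delta>. \<Prod>j<n. s j (\<delta> j)) x
     = (\<Prod>j<n. \<Sum>k\<le>N. s j k * int_binom (x j) k)"
  unfolding binom_sum_def prod.distrib[symmetric] by (rule sum_index_box_prod)

lemma binom_sum_dvd_coeff:
  assumes fin: "finite S" and S: "\<And>\<delta> j. \<delta> \<in> S \<Longrightarrow> n \<le> j \<Longrightarrow> \<delta> j = 0"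
    and vanish: "\<And>m. r dvd binom_sum n S d (\<lambda>j. int (m j))" and "\<delta> \<in> S"
  shows "r dvd d \<delta>"
  using \<open>\<delta> \<in> S\<close>
proof (induction "\<Sum>j<n. \<delta> j" arbitrary: \<delta> rule: less_induct)
  case less
  \<comment> \<open>At the point \<delta> only indices \<delta>' \<le> \<delta> contribute; those below \<delta> are handled by induction.\<close>
  have "r dvd d \<delta>' * (\<Prod>j<n. int_binom (int (\<delta> j)) (\<delta>' j))" if \<delta>': "\<delta>' \<in> S - {\<delta>}" for \<delta>'
  proof (cases "\<exists>j<n. \<delta> j < \<delta>' j")
    case True
    then obtain j where "j < n" "\<delta> j < \<delta>' j" by blast
    then have "(\<Prod>j<n. int_binom (int (\<delta> j)) (\<delta>' j)) = 0"
      by (intro prod_zero) (auto simp: binomial_eq_0)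
    then show ?thesis by (metis dvd_0_right mult_zero_right)
  next
    case False
    have le: "\<delta>' j \<le> \<delta> j" if "j < n" for j
      using False that leI by blast
    have "\<delta>' \<noteq> \<delta>" using \<delta>' by simp
    then obtain j where j: "\<delta>' j \<noteq> \<delta> j" by blast
    have "j < n"
      using j S[of \<delta>' j] S[OF less.prems, of j] \<delta>' by (cases "j < n") auto
    with j le have "(\<Sum>j<n. \<delta>' j) < (\<Sum>j<n. \<delta> j)"
      by (intro sum_strict_mono_ex1) (auto intro!: bexI[of _ j] simp: order.strict_iff_order)
    then show ?thesis using less \<delta>' by simp
  qed
  then have "r dvd (\<Sum>\<delta>'\<in>S - {\<delta>}. d \<delta>' * (\<Prod>j<n. int_binom (int (\<delta> j)) (\<delta>' j)))"
    by (rule dvd_sum)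
  moreover have "binom_sum n S d (\<lambda>j. int (\<delta> j))
      = d \<delta> + (\<Sum>\<delta>'\<in>S - {\<delta>}. d \<delta>' * (\<Prod>j<n. int_binom (int (\<delta> j)) (\<delta>' j)))"
    unfolding binom_sum_def using fin less.prems by (simp add: sum.remove)
  ultimately show ?case
    using vanish[of \<delta>] by (simp add: dvd_add_left_iff)
qed

lemma polyfract_eqI:
  assumes c: "is_polyfract n r c" and d: "is_polyfract n r d"
    and eval: "\<And>x. pf_eval n r c x = pf_eval n r d x"
  shows "c = d"
proof
  fix \<delta>
  define S where "S = {\<delta>. c \<delta> \<noteq> 0} \<union> {\<delta>. d \<delta> \<noteq> 0}"
  have fin: "finite S" using c d unfolding S_def is_polyfract_def by simp
  have S: "\<delta> j = 0" if "\<delta> \<in> S" "n \<le> j" for \<delta> j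
    using c d that unfolding S_def is_polyfract_def by auto
  have vanish: "r dvd binom_sum n S (\<lambda>\<delta>. c \<delta> - d \<delta>) x" for x
  proof -
    have "binom_sum n S c x mod r = binom_sum n S d x mod r"
      using eval[of x] pf_eval_eq_binom_sum[OF fin] unfolding S_def by simp
    then show ?thesis
      unfolding binom_sum_def by (simp add: mod_eq_dvd_iff sum_subtractf left_diff_distrib)
  qed
  have dvd: "r dvd c \<delta> - d \<delta>" if "\<delta> \<in> S"
    using fin S vanish that by (rule binom_sum_dvd_coeff)
  have "[c \<delta> = d \<delta>] (mod r)"
  proof (cases "\<delta> \<in> S")
    case True
    then show ?thesis using dvd by (simp add: cong_iff_dvd_diff)
  next
    case False
    then have "c \<delta> = 0" "d \<delta> = 0" unfolding S_def by auto
    then show ?thesis by simp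
  qed
  moreover have "0 \<le> c \<delta>" "c \<delta> < r" "0 \<le> d \<delta>" "d \<delta> < r"
    using c d unfolding is_polyfract_def by auto
  ultimately show "c \<delta> = d \<delta>"
    by (intro cong_less_imp_eq_int)
qed

definition periodic_fun :: "nat \<Rightarrow> (nat \<Rightarrow> nat) \<Rightarrow> ((nat \<Rightarrow> int) \<Rightarrow> int) \<Rightarrow> bool" where
  "periodic_fun n q f \<longleftrightarrow>
     (\<forall>x j. j < n \<longrightarrow> f (x(j := x j + int (q j))) = f x) \<and>
     (\<forall>x y. (\<forall>j<n. x j = y j) \<longrightarrow> f x = f y)"

lemma periodic_fun_cong:
  assumes f: "periodic_fun n q f" and xy: "\<And>j. j < n \<Longrightarrow> [x j = y j] (mod int (q j))"
  shows "f x = f y"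
proof -
  define z where "z k = (\<lambda>j. if j < k then y j else x j)" for k
  have "f (z k) = f x" if "k \<le> n" for k
    using that
  proof (induction k)
    case (Suc k)
    obtain t where t: "y k = x k + t * int (q k)"
      using xy[of k] Suc.prems unfolding cong_iff_lin by (auto simp: mult.commute)
    have "f (w(k := w k + int (q k))) = f w" for w
      using f Suc.prems unfolding periodic_fun_def by simp
    then have "[f ((z k)(k := v + int (q k))) = f ((z k)(k := v))] (mod 0)" for v
      using fun_upd_upd[of "z k" k v] by (metis cong_0 fun_upd_same)
    then have "f ((z k)(k := x k + t * int (q k))) = f ((z k)(k := x k))"
      using cong_periodic_shift[of "\<lambda>v. f ((z k)(k := v))" "q k" 0 "x k" t] by simp
    moreover have "z (Suc k) = (z k)(k := x k + t * int (q k))" "(z k)(k := x k) = z k"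
      using t by (auto simp: z_def)
    ultimately have "f (z (Suc k)) = f (z k)"
      by (simp only:)
    with Suc show ?case by simp
  qed (simp add: z_def)
  moreover have "f (z n) = f y"
    using f unfolding periodic_fun_def z_def by simp
  ultimately show ?thesis by simp
qed

lemma residue_indicator_eq_if:
  assumes "a < q"
  shows "residue_indicator q a y = (if a = nat (y mod int q) then 1 else 0)"
proof -
  have "int q dvd y - int a \<longleftrightarrow> y mod int q = int a"
    using assms by (simp add: mod_eq_dvd_iff[symmetric] cong_def[symmetric] cong_iff_dvd_diff)
  then show ?thesis
    using assms unfolding residue_indicator_def by auto
qed

lemma prod_residue_indicator_index_box:
  assumes q: "\<And>j. j < n \<Longrightarrow> q j \<ge> 1" and a: "a \<in> index_box n (\<lambda>j. q j - 1)"
  shows "(\<Prod>j<n. residue_indicator (q j) (a j) (x j))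
           = (if (\<lambda>j. if j < n then nat (x j mod int (q j)) else 0) = a then 1 else 0)"
    (is "_ = (if ?a0 = a then 1 else 0)")
proof -
  have "residue_indicator (q j) (a j) (x j) = (if a j = ?a0 j then 1 else 0)" if "j < n" for j
  proof -
    have "a j < q j"
      using a q[OF that] that unfolding index_box_def by fastforce
    then show ?thesis
      using that by (simp add: residue_indicator_eq_if)
  qed
  then have "(\<Prod>j<n. residue_indicator (q j) (a j) (x j)) = (\<Prod>j<n. if a j = ?a0 j then 1 else 0)"
    by (intro prod.cong) auto
  also have "\<dots> = (if ?a0 = a then 1 else 0)"
    using a unfolding index_box_def by (auto simp: fun_eq_iff intro!: prod_zero) (metis lessThan_iff)
  finally show ?thesis .
qed

lemma sum_index_box_residue_indicator:
  assumes q: "\<And>j. j < n \<Longrightarrow> q j \<ge> 1"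
  shows "(\<Sum>a\<in>index_box n (\<lambda>j. q j - 1). g a * (\<Prod>j<n. residue_indicator (q j) (a j) (x j)))
           = g (\<lambda>j. if j < n then nat (x j mod int (q j)) else 0)"
    (is "_ = g ?a0")
proof -
  have "x j mod int (q j) \<le> int (q j - 1)" if "j < n" for j
    using q[OF that] by simp
  then have "?a0 \<in> index_box n (\<lambda>j. q j - 1)"
    unfolding index_box_def by (auto simp: nat_le_iff)
  moreover have "(\<Sum>a\<in>index_box n (\<lambda>j. q j - 1). g a * (\<Prod>j<n. residue_indicator (q j) (a j) (x j)))
      = (\<Sum>a\<in>index_box n (\<lambda>j. q j - 1). if ?a0 = a then g a else 0)"
    using prod_residue_indicator_index_box[OF q] by (intro sum.cong) auto
  ultimately show ?thesis
    by (simp add: sum.delta'[OF finite_index_box])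
qed

lemma periodic_fun_interpolation:
  assumes f: "periodic_fun n q f" and q: "\<And>j. j < n \<Longrightarrow> q j \<ge> 1"
  shows "f x = (\<Sum>a\<in>index_box n (\<lambda>j. q j - 1).
                  f (\<lambda>j. int (a j)) * (\<Prod>j<n. residue_indicator (q j) (a j) (x j)))"
proof -
  have "0 \<le> x j mod int (q j)" if "j < n" for j
    using q[OF that] by simp
  then have "f x = f (\<lambda>j. int (if j < n then nat (x j mod int (q j)) else 0))"
    by (intro periodic_fun_cong[OF f]) (simp add: cong_def)
  then show ?thesis
    using sum_index_box_residue_indicator[OF q, where g="\<lambda>a. f (\<lambda>j. int (a j))" and x=x] by simp
qed

text \<open>The Newton coefficient (\<Delta>^\<delta> f)(0) of a periodic f, computed from the expansion of f
  in indicator functions of residue classes, and cut off outside the box \<delta> \<le> D.\<close>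

definition newton_coeffs ::
  "nat \<Rightarrow> (nat \<Rightarrow> nat) \<Rightarrow> nat \<Rightarrow> ((nat \<Rightarrow> int) \<Rightarrow> int) \<Rightarrow> (nat \<Rightarrow> nat) \<Rightarrow> int" where
  "newton_coeffs n q D f \<delta> =
     (if \<delta> \<in> index_box n (\<lambda>_. D)
      then (\<Sum>a\<in>index_box n (\<lambda>j. q j - 1). f (\<lambda>j. int (a j)) * (\<Prod>j<n. indicator_diff (q j) (a j) (\<delta> j)))
      else 0)"

lemma binom_sum_newton_coeffs_cong:
  assumes f: "periodic_fun n q f" and q: "\<And>j. j < n \<Longrightarrow> q j \<ge> 1"
    and trunc: "\<And>j a k. j < n \<Longrightarrow> D < k \<Longrightarrow> r dvd indicator_diff (q j) a k"
  shows "[binom_sum n (index_box n (\<lambda>_. D)) (newton_coeffs n q D f) x = f x] (mod r)"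
proof -
  define A where "A = index_box n (\<lambda>j. q j - 1)"
  define B where "B = index_box n (\<lambda>_. D)"
  have "binom_sum n B (newton_coeffs n q D f) x
      = (\<Sum>a\<in>A. f (\<lambda>j. int (a j)) * binom_sum n B (\<lambda>\<delta>. \<Prod>j<n. indicator_diff (q j) (a j) (\<delta> j)) x)"
    unfolding binom_sum_def newton_coeffs_def A_def B_def
    by (simp add: sum_distrib_left sum_distrib_right mult.assoc cong: sum.cong) (rule sum.swap)
  also have "\<dots> = (\<Sum>a\<in>A. f (\<lambda>j. int (a j)) * (\<Prod>j<n. \<Sum>k\<le>D. indicator_diff (q j) (a j) k * int_binom (x j) k))"
  proof (intro sum.cong refl)
    fix a
    show "f (\<lambda>j. int (a j)) * binom_sum n B (\<lambda>\<delta>. \<Prod>j<n. indicator_diff (q j) (a j) (\<delta> j)) x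
        = f (\<lambda>j. int (a j)) * (\<Prod>j<n. \<Sum>k\<le>D. indicator_diff (q j) (a j) k * int_binom (x j) k)"
      unfolding B_def using binom_sum_prod_index_box[of n D "\<lambda>j k. indicator_diff (q j) (a j) k" x] by simp
  qed
  also have "[\<dots> = (\<Sum>a\<in>A. f (\<lambda>j. int (a j)) * (\<Prod>j<n. residue_indicator (q j) (a j) (x j)))] (mod r)"
    using residue_indicator_cong_newton[OF q trunc]
    by (intro cong_sum cong_scalar_left cong_prod) (simp add: cong_sym)
  also have "(\<Sum>a\<in>A. f (\<lambda>j. int (a j)) * (\<Prod>j<n. residue_indicator (q j) (a j) (x j))) = f x"
    unfolding A_def by (rule periodic_fun_interpolation[OF f q, symmetric])
  finally show ?thesis unfolding B_def .
qed

definition newton_polyfract ::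
  "nat \<Rightarrow> int \<Rightarrow> (nat \<Rightarrow> nat) \<Rightarrow> nat \<Rightarrow> ((nat \<Rightarrow> int) \<Rightarrow> int) \<Rightarrow> (nat \<Rightarrow> nat) \<Rightarrow> int" where
  "newton_polyfract n r q D f \<delta> = newton_coeffs n q D f \<delta> mod r"

lemma newton_polyfract_support: "{\<delta>. newton_polyfract n r q D f \<delta> \<noteq> 0} \<subseteq> index_box n (\<lambda>_. D)"
  unfolding newton_polyfract_def newton_coeffs_def by auto

lemma is_polyfract_newton_polyfract:
  assumes "r > 0"
  shows "is_polyfract n r (newton_polyfract n r q D f)"
  using assms newton_polyfract_support[of n r q D f] finite_subset[OF _ finite_index_box]
  unfolding is_polyfract_def by (auto simp: newton_polyfract_def index_box_def)

lemma pf_eval_newton_polyfract: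
  assumes "periodic_fun n q f" and "\<And>j. j < n \<Longrightarrow> q j \<ge> 1"
    and "\<And>j a k. j < n \<Longrightarrow> D < k \<Longrightarrow> r dvd indicator_diff (q j) a k"
  shows "pf_eval n r (newton_polyfract n r q D f) x = f x mod r"
proof -
  have "pf_eval n r (newton_polyfract n r q D f) x
      = binom_sum n (index_box n (\<lambda>_. D)) (newton_polyfract n r q D f) x mod r"
    by (rule pf_eval_eq_binom_sum[OF finite_index_box newton_polyfract_support])
  also have "\<dots> = binom_sum n (index_box n (\<lambda>_. D)) (newton_coeffs n q D f) x mod r"
    unfolding binom_sum_def newton_polyfract_def cong_def[symmetric]
    by (intro cong_sum cong_scalar_right) simp
  also have "\<dots> = f x mod r"
    using binom_sum_newton_coeffs_cong[OF assms] unfolding cong_def .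
  finally show ?thesis .
qed

lemma pf_degree_le:
  assumes "finite {\<delta>. c \<delta> \<noteq> 0}" and "\<And>\<delta>. c \<delta> \<noteq> 0 \<Longrightarrow> (\<Sum>j<n. \<delta> j) \<le> D"
  shows "pf_degree n c \<le> D"
  using assms unfolding pf_degree_def by (subst Max_le_iff) auto

lemma pf_degree_ge:
  assumes "finite {\<delta>. c \<delta> \<noteq> 0}" and "c \<delta> \<noteq> 0"
  shows "(\<Sum>j<n. \<delta> j) \<le> pf_degree n c"
  using assms unfolding pf_degree_def by (intro Max_ge) auto

lemma pf_degree_newton_polyfract_le:
  assumes "\<And>\<delta> a. D < (\<Sum>j<n. \<delta> j) \<Longrightarrow> r dvd (\<Prod>j<n. indicator_diff (q j) (a j) (\<delta> j))"
  shows "pf_degree n (newton_polyfract n r q D f) \<le> D"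
proof (rule pf_degree_le)
  show "finite {\<delta>. newton_polyfract n r q D f \<delta> \<noteq> 0}"
    using newton_polyfract_support finite_index_box by (rule finite_subset)
  fix \<delta> assume nz: "newton_polyfract n r q D f \<delta> \<noteq> 0"
  show "(\<Sum>j<n. \<delta> j) \<le> D"
  proof (rule ccontr)
    assume "\<not> (\<Sum>j<n. \<delta> j) \<le> D"
    then have "r dvd newton_coeffs n q D f \<delta>"
      unfolding newton_coeffs_def using assms by (auto intro!: dvd_sum dvd_mult)
    with nz show False
      unfolding newton_polyfract_def by simp
  qed
qed

lemma periodic_fun_pf_eval:
  assumes "pf_periodic n r (\<lambda>j. int (q j)) c"
  shows "periodic_fun n q (pf_eval n r c)"
  using assms unfolding periodic_fun_def pf_periodic_def
proof (intro conjI allI impI)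
  fix x y :: "nat \<Rightarrow> int" assume "\<forall>j<n. x j = y j"
  then have "(\<Prod>j<n. int_binom (x j) (\<delta> j)) = (\<Prod>j<n. int_binom (y j) (\<delta> j))" for \<delta>
    by (intro prod.cong) auto
  then show "pf_eval n r c x = pf_eval n r c y"
    unfolding pf_eval_def by simp
qed simp

lemma periodic_polyfract_eq_newton_polyfract:
  assumes c: "is_polyfract n r c" and per: "pf_periodic n r (\<lambda>j. int (q j)) c"
    and q: "\<And>j. j < n \<Longrightarrow> q j \<ge> 1"
    and trunc: "\<And>j a k. j < n \<Longrightarrow> D < k \<Longrightarrow> r dvd indicator_diff (q j) a k"
  shows "c = newton_polyfract n r q D (pf_eval n r c)"
proof (rule polyfract_eqI[OF c])
  have "r > 0"
    using c unfolding is_polyfract_def by (meson le_less_trans)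
  then show "is_polyfract n r (newton_polyfract n r q D (pf_eval n r c))"
    by (rule is_polyfract_newton_polyfract)
  show "pf_eval n r c x = pf_eval n r (newton_polyfract n r q D (pf_eval n r c)) x" for x
    using pf_eval_newton_polyfract[OF periodic_fun_pf_eval[OF per] q trunc]
    by (simp add: pf_eval_def)
qed

lemma pf_degree_periodic_le:
  assumes "is_polyfract n r c" and "pf_periodic n r (\<lambda>j. int (q j)) c"
    and "\<And>j. j < n \<Longrightarrow> q j \<ge> 1"
    and "\<And>j a k. j < n \<Longrightarrow> D < k \<Longrightarrow> r dvd indicator_diff (q j) a k"
    and "\<And>\<delta> a. D < (\<Sum>j<n. \<delta> j) \<Longrightarrow> r dvd (\<Prod>j<n. indicator_diff (q j) (a j) (\<delta> j))"
  shows "pf_degree n c \<le> D"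
  using periodic_polyfract_eq_newton_polyfract[OF assms(1-4)] pf_degree_newton_polyfract_le[OF assms(5)]
  by metis

lemma periodic_fun_lagrange_prod: "periodic_fun n q (lagrange_prod n (\<lambda>j. int (q j)))"
  unfolding periodic_fun_def lagrange_prod_def
proof (intro conjI allI impI)
  fix x :: "nat \<Rightarrow> int" and j assume "j < n"
  show "(\<Prod>i<n. if int (q i) dvd (x(j := x j + int (q j))) i then 1 else 0)
      = (\<Prod>i<n. if int (q i) dvd x i then 1 else 0)"
    by (intro prod.cong) auto
next
  fix x y :: "nat \<Rightarrow> int" assume "\<forall>j<n. x j = y j"
  then show "(\<Prod>i<n. if int (q i) dvd x i then 1 else 0) = (\<Prod>i<n. if int (q i) dvd y i then 1 else 0)"
    by (intro prod.cong) auto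
qed

lemma lagrange_prod_mod:
  assumes "r > 1"
  shows "lagrange_prod n q x mod r = lagrange_prod n q x"
proof (cases "\<forall>j<n. q j dvd x j")
  case False
  then have "lagrange_prod n q x = 0"
    unfolding lagrange_prod_def by (auto intro: prod_zero)
  then show ?thesis by simp
qed (use assms in \<open>simp add: lagrange_prod_def\<close>)

lemma newton_coeffs_lagrange_prod:
  assumes q: "\<And>j. j < n \<Longrightarrow> q j \<ge> 1" and \<delta>: "\<delta> \<in> index_box n (\<lambda>_. D)"
  shows "newton_coeffs n q D (lagrange_prod n (\<lambda>j. int (q j))) \<delta> = (\<Prod>j<n. indicator_diff (q j) 0 (\<delta> j))"
proof -
  have "lagrange_prod n (\<lambda>j. int (q j)) (\<lambda>j. int (a j)) = (\<Prod>j<n. residue_indicator (q j) (a j) 0)" for a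
    unfolding lagrange_prod_def residue_indicator_def by simp
  then show ?thesis
    using \<delta> sum_index_box_residue_indicator[where n=n and q=q and x="\<lambda>_. 0"
        and g="\<lambda>a. \<Prod>j<n. indicator_diff (q j) (a j) (\<delta> j)", OF q]
    unfolding newton_coeffs_def by (simp add: mult.commute)
qed

lemma lagrange_polyfract:
  assumes r: "r > 1" and q: "\<And>j. j < n \<Longrightarrow> q j \<ge> 1"
    and trunc: "\<And>j a k. j < n \<Longrightarrow> D < k \<Longrightarrow> r dvd indicator_diff (q j) a k"
    and high: "\<And>\<delta> a. D < (\<Sum>j<n. \<delta> j) \<Longrightarrow> r dvd (\<Prod>j<n. indicator_diff (q j) (a j) (\<delta> j))"
    and \<delta>: "(\<Sum>j<n. \<delta> j) = D" "\<And>j. n \<le> j \<Longrightarrow> \<delta> j = 0"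
    and nondvd: "\<not> r dvd (\<Prod>j<n. indicator_diff (q j) 0 (\<delta> j))"
  shows "\<exists>L. is_polyfract n r L \<and> (\<forall>x. pf_eval n r L x = lagrange_prod n (\<lambda>j. int (q j)) x)
             \<and> pf_degree n L = D"
proof (intro exI conjI allI)
  define L where "L = newton_polyfract n r q D (lagrange_prod n (\<lambda>j. int (q j)))"
  show "is_polyfract n r L"
    unfolding L_def using r by (intro is_polyfract_newton_polyfract) simp
  show "pf_eval n r L x = lagrange_prod n (\<lambda>j. int (q j)) x" for x
    using pf_eval_newton_polyfract[OF periodic_fun_lagrange_prod[of n q] q trunc] lagrange_prod_mod[OF r]
    unfolding L_def by simp
  have "\<delta> j \<le> D" if "j < n" for j
    using that \<delta>(1) member_le_sum[of j "{..<n}" \<delta>] by simp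
  then have "\<delta> \<in> index_box n (\<lambda>_. D)"
    using \<delta>(2) unfolding index_box_def by simp
  then have "L \<delta> \<noteq> 0"
    using nondvd newton_coeffs_lagrange_prod[where n=n and q=q, OF q]
    unfolding L_def newton_polyfract_def by (simp add: dvd_eq_mod_eq_0)
  then have "D \<le> pf_degree n L"
    using pf_degree_ge[OF finite_subset[OF newton_polyfract_support finite_index_box]] \<delta>(1)
    unfolding L_def by metis
  moreover have "pf_degree n L \<le> D"
    unfolding L_def by (rule pf_degree_newton_polyfract_le[OF high])
  ultimately show "pf_degree n L = D" by simp
qed

section \<open>Prime-power moduli\<close>

lemma prime_power_totient_le_Max:
  fixes p :: nat and \<alpha> :: "nat \<Rightarrow> nat"
  assumes "p > 0" and "j < n"
  shows "(p - 1) * p ^ (\<alpha> j - 1) \<le> (p - 1) * p ^ (Max (\<alpha> ` {..<n}) - 1)"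
proof -
  have "\<alpha> j \<le> Max (\<alpha> ` {..<n})"
    using assms by (intro Max_ge) auto
  then have "p ^ (\<alpha> j - 1) \<le> p ^ (Max (\<alpha> ` {..<n}) - 1)"
    using assms by (intro power_increasing diff_le_mono) auto
  then show ?thesis
    by simp
qed

lemma coordinate_bound_le:
  fixes p \<beta> n :: nat and \<alpha> :: "nat \<Rightarrow> nat"
  assumes p: "prime p" and j: "j < n"
  shows "p ^ \<alpha> j - 1 + (\<beta> - 1) * ((p - 1) * p ^ (\<alpha> j - 1))
           \<le> (\<Sum>j<n. p ^ \<alpha> j) - n + (\<beta> - 1) * (p - 1) * p ^ (Max (\<alpha> ` {..<n}) - 1)"
proof -
  have p1: "p > 1" using prime_gt_1_nat[OF p] .
  have "(\<Sum>i<n. p ^ \<alpha> i) - n = (\<Sum>i<n. p ^ \<alpha> i - 1)"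
    using p1 by (simp add: sum_subtractf_nat)
  moreover have "p ^ \<alpha> j - 1 \<le> (\<Sum>i<n. p ^ \<alpha> i - 1)"
    using j by (intro member_le_sum) auto
  moreover have "(\<beta> - 1) * ((p - 1) * p ^ (\<alpha> j - 1)) \<le> (\<beta> - 1) * (p - 1) * p ^ (Max (\<alpha> ` {..<n}) - 1)"
    using prime_power_totient_le_Max[of p j n \<alpha>] p1 j by (simp add: mult.assoc)
  ultimately show ?thesis by linarith
qed

lemma indicator_diff_dvd_beyond:
  fixes p :: nat
  assumes p: "prime p" and \<alpha>: "\<alpha> \<ge> 1" and \<beta>: "\<beta> \<ge> 1"
    and k: "p ^ \<alpha> - 1 + (\<beta> - 1) * ((p - 1) * p ^ (\<alpha> - 1)) < k"
  shows "int p ^ \<beta> dvd indicator_diff (p ^ \<alpha>) a k"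
proof -
  have pos: "0 < (p - 1) * p ^ (\<alpha> - 1)" and "p ^ \<alpha> \<ge> 1"
    using prime_power_totient_bounds[OF p \<alpha>] prime_gt_0_nat[OF p] by auto
  with k have "p ^ \<alpha> + (\<beta> - 1) * ((p - 1) * p ^ (\<alpha> - 1)) \<le> k"
    by linarith
  then have "\<beta> - 1 + 1 \<le> val_bound (p ^ \<alpha>) ((p - 1) * p ^ (\<alpha> - 1)) k"
    by (rule val_bound_ge[OF pos])
  then have "\<beta> \<le> val_bound (p ^ \<alpha>) ((p - 1) * p ^ (\<alpha> - 1)) k"
    using \<beta> by simp
  then show ?thesis
    using indicator_diff_val_bound[OF p \<alpha>] le_imp_power_dvd dvd_trans by blast
qed

lemma prod_indicator_diff_dvd:
  fixes p \<beta> n :: nat and \<alpha> \<delta> a :: "nat \<Rightarrow> nat"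
  assumes p: "prime p" and \<alpha>: "\<And>j. j < n \<Longrightarrow> \<alpha> j \<ge> 1"
    and big: "(\<Sum>j<n. p ^ \<alpha> j) - n + (\<beta> - 1) * (p - 1) * p ^ (Max (\<alpha> ` {..<n}) - 1) < (\<Sum>j<n. \<delta> j)"
  shows "int p ^ \<beta> dvd (\<Prod>j<n. indicator_diff (p ^ \<alpha> j) (a j) (\<delta> j))"
proof -
  define \<Phi> where "\<Phi> = (p - 1) * p ^ (Max (\<alpha> ` {..<n}) - 1)"
  define b where "b j = val_bound (p ^ \<alpha> j) ((p - 1) * p ^ (\<alpha> j - 1)) (\<delta> j)" for j
  have p1: "p > 1" using prime_gt_1_nat[OF p] .
  have "(\<Prod>j<n. int p ^ b j) dvd (\<Prod>j<n. indicator_diff (p ^ \<alpha> j) (a j) (\<delta> j))"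
    using indicator_diff_val_bound[OF p \<alpha>] unfolding b_def by (intro prod_dvd_prod) auto
  then have pow: "int p ^ (\<Sum>j<n. b j) dvd (\<Prod>j<n. indicator_diff (p ^ \<alpha> j) (a j) (\<delta> j))"
    by (simp add: power_sum)
  have "\<delta> j + 1 \<le> p ^ \<alpha> j + \<Phi> * b j" if j: "j < n" for j
  proof -
    have "\<delta> j + 1 \<le> p ^ \<alpha> j + (p - 1) * p ^ (\<alpha> j - 1) * b j"
      unfolding b_def using p1 by (intro le_val_bound) simp
    moreover have "(p - 1) * p ^ (\<alpha> j - 1) * b j \<le> \<Phi> * b j"
      unfolding \<Phi>_def using prime_power_totient_le_Max[of p j n \<alpha>] p1 j by simp
    ultimately show ?thesis by linarith
  qed
  then have "(\<Sum>j<n. \<delta> j + 1) \<le> (\<Sum>j<n. p ^ \<alpha> j + \<Phi> * b j)"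
    by (intro sum_mono) auto
  moreover have "(\<Sum>j<n. \<delta> j + 1) = (\<Sum>j<n. \<delta> j) + n"
    by (simp only: sum.distrib) simp
  moreover have "(\<Sum>j<n. p ^ \<alpha> j + \<Phi> * b j) = (\<Sum>j<n. p ^ \<alpha> j) + \<Phi> * (\<Sum>j<n. b j)"
    by (simp add: sum.distrib sum_distrib_left)
  moreover have "n \<le> (\<Sum>j<n. p ^ \<alpha> j)"
    using sum_mono[of "{..<n}" "\<lambda>_. 1::nat" "\<lambda>j. p ^ \<alpha> j"] p1 by simp
  moreover have "(\<Sum>j<n. p ^ \<alpha> j) - n + (\<beta> - 1) * \<Phi> < (\<Sum>j<n. \<delta> j)"
    using big unfolding \<Phi>_def by (simp add: mult.assoc)
  ultimately have "\<Phi> * (\<beta> - 1) < \<Phi> * (\<Sum>j<n. b j)"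
    by (simp only: mult.commute[of \<Phi>])
  then have "\<beta> - 1 < (\<Sum>j<n. b j)"
    by simp
  then have "\<beta> \<le> (\<Sum>j<n. b j)"
    by linarith
  then show ?thesis
    using pow le_imp_power_dvd dvd_trans by blast
qed

lemma prod_indicator_diff_extremal:
  fixes p \<beta> n :: nat and \<alpha> :: "nat \<Rightarrow> nat"
  assumes p: "prime p" and n: "n \<ge> 1" and \<alpha>: "\<And>j. j < n \<Longrightarrow> \<alpha> j \<ge> 1" and \<beta>: "\<beta> \<ge> 1"
  shows "\<exists>\<delta>. (\<Sum>j<n. \<delta> j) = (\<Sum>j<n. p ^ \<alpha> j) - n + (\<beta> - 1) * (p - 1) * p ^ (Max (\<alpha> ` {..<n}) - 1)
           \<and> (\<forall>j\<ge>n. \<delta> j = 0) \<and> \<not> int p ^ \<beta> dvd (\<Prod>j<n. indicator_diff (p ^ \<alpha> j) 0 (\<delta> j))"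
proof -
  have p1: "p > 1" using prime_gt_1_nat[OF p] .
  have "Max (\<alpha> ` {..<n}) \<in> \<alpha> ` {..<n}"
    using n by (intro Max_in) (auto simp: lessThan_empty_iff)
  then obtain m where m: "m < n" "\<alpha> m = Max (\<alpha> ` {..<n})"
    by auto
  define \<phi> where "\<phi> = (p - 1) * p ^ (\<alpha> m - 1)"
  \<comment> \<open>Every coordinate other than m sits at p ^ \<alpha> j - 1, where the difference is 1 or -1.\<close>
  define \<delta> where "\<delta> j = (if j < n then p ^ \<alpha> j - 1 + (if j = m then (\<beta> - 1) * \<phi> else 0) else 0)" for j
  obtain u where u: "indicator_diff (p ^ \<alpha> m) 0 (\<delta> m) = int p ^ (\<beta> - 1) * u" "\<not> int p dvd u"
    using indicator_diff_exact_val[OF p \<alpha>[OF m(1)], of "\<beta> - 1"] m(1) unfolding \<delta>_def \<phi>_def by auto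
  define e where "e = (\<Sum>j\<in>{..<n} - {m}. p ^ \<alpha> j - 1)"
  have "(\<Prod>j\<in>{..<n} - {m}. indicator_diff (p ^ \<alpha> j) 0 (\<delta> j)) = (\<Prod>j\<in>{..<n} - {m}. (-1) ^ (p ^ \<alpha> j - 1))"
    using p1 by (intro prod.cong) (auto simp: \<delta>_def indicator_diff_below_period)
  then have "(\<Prod>j<n. indicator_diff (p ^ \<alpha> j) 0 (\<delta> j)) = int p ^ (\<beta> - 1) * (u * (-1) ^ e)"
    using m(1) u(1) unfolding e_def by (simp add: prod.remove power_sum)
  moreover have "\<not> int p dvd u * (-1) ^ e"
    using u(2) by (cases "even e") auto
  moreover have "int p ^ \<beta> = int p ^ (\<beta> - 1) * int p"
    using \<beta> by (simp add: power_eq_if)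
  ultimately have "\<not> int p ^ \<beta> dvd (\<Prod>j<n. indicator_diff (p ^ \<alpha> j) 0 (\<delta> j))"
    using p1 by simp
  moreover have "(\<Sum>j<n. \<delta> j) = (\<Sum>j<n. p ^ \<alpha> j) - n + (\<beta> - 1) * (p - 1) * p ^ (Max (\<alpha> ` {..<n}) - 1)"
  proof -
    have "(\<Sum>j<n. \<delta> j) = (\<Sum>j<n. (p ^ \<alpha> j - 1) + (if j = m then (\<beta> - 1) * \<phi> else 0))"
      unfolding \<delta>_def by (intro sum.cong) auto
    also have "\<dots> = (\<Sum>j<n. p ^ \<alpha> j - 1) + (\<beta> - 1) * \<phi>"
      using m(1) by (simp add: sum.distrib)
    also have "(\<Sum>j<n. p ^ \<alpha> j - 1) = (\<Sum>j<n. p ^ \<alpha> j) - n"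
      using p1 by (simp add: sum_subtractf_nat)
    finally show ?thesis
      using m(2) unfolding \<phi>_def by (simp add: mult.assoc)
  qed
  ultimately show ?thesis
    by (intro exI[of _ \<delta>]) (simp add: \<delta>_def)
qed

theorem theorem3p9:
  fixes p \<beta> n :: nat and \<alpha> :: "nat \<Rightarrow> nat"
  assumes "prime p" and "\<beta> \<ge> 1" and "n \<ge> 1" and "\<forall>j<n. \<alpha> j \<ge> 1"
  defines "bound \<equiv> (\<Sum>j<n. p ^ \<alpha> j) - n + (\<beta> - 1) * (p - 1) * p ^ (Max (\<alpha> ` {..<n}) - 1)"
  shows "(\<forall>c. is_polyfract n (int p ^ \<beta>) c \<and>
              pf_periodic n (int p ^ \<beta>) (\<lambda>j. int p ^ \<alpha> j) c
              \<longrightarrow> pf_degree n c \<le> bound)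
       \<and> (\<exists>L. is_polyfract n (int p ^ \<beta>) L \<and>
              (\<forall>x. pf_eval n (int p ^ \<beta>) L x = lagrange_prod n (\<lambda>j. int p ^ \<alpha> j) x) \<and>
              pf_degree n L = bound)"
proof -
  note p = \<open>prime p\<close> and \<alpha> = \<open>\<forall>j<n. \<alpha> j \<ge> 1\<close>[rule_format]
  define q where "q j = p ^ \<alpha> j" for j
  have periods: "(\<lambda>j. int p ^ \<alpha> j) = (\<lambda>j. int (q j))"
    unfolding q_def by simp
  have q: "q j \<ge> 1" for j
    using prime_gt_0_nat[OF p] unfolding q_def by simp
  have r: "int p ^ \<beta> > 1"
    using prime_gt_1_nat[OF p] \<open>\<beta> \<ge> 1\<close> by simp
  have trunc: "int p ^ \<beta> dvd indicator_diff (q j) a k" if "j < n" "bound < k" for j a k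
    using indicator_diff_dvd_beyond[OF p \<alpha> \<open>\<beta> \<ge> 1\<close>] coordinate_bound_le[OF p, of j n \<alpha> \<beta>] that
    unfolding q_def bound_def by simp
  have high: "int p ^ \<beta> dvd (\<Prod>j<n. indicator_diff (q j) (a j) (\<delta> j))" if "bound < (\<Sum>j<n. \<delta> j)" for a \<delta>
    using prod_indicator_diff_dvd[where \<alpha>=\<alpha> and n=n, OF p \<alpha>] that unfolding q_def bound_def by simp
  obtain \<delta> where "(\<Sum>j<n. \<delta> j) = bound" "\<forall>j\<ge>n. \<delta> j = 0"
    and "\<not> int p ^ \<beta> dvd (\<Prod>j<n. indicator_diff (q j) 0 (\<delta> j))"
    using prod_indicator_diff_extremal[where \<alpha>=\<alpha> and \<beta>=\<beta>, OF p \<open>n \<ge> 1\<close> \<alpha> \<open>\<beta> \<ge> 1\<close>]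
    unfolding q_def bound_def by blast
  then show ?thesis
    unfolding periods using pf_degree_periodic_le[OF _ _ q trunc high] lagrange_polyfract[OF r q trunc high]
    by blast
qed

end
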